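(* Let $\alpha\in(0,1)$ and $\phi(x)=x(1-x)^{-\alpha}$, so $\phi_m=m(\alpha)_{m-1}$. Then $\psi(x):=-\phi(-x)=x(1+x)^{-\alpha}$, $x>-1$, is the Laplace exponent of a subordinator whose Lévy measure has infinite total mass. Moreover, for integers $1\le P\le k$, the estimator $\widetilde\gamma:=B_{k,P-1}(\phi_\bullet)/B_{k,P}(\phi_\bullet)$ of the biodiversity parameter $\gamma$ is given explicitly by $$\widetilde\gamma=\frac{P}{k-P+1}\,\frac{(\alpha(P-1))_{k-P+1}}{(\alpha P)_{k-P}}.$$
   Context: $(a)_j=a(a+1)\cdots(a+j-1)$ denotes the Pochhammer symbol, with $(a)_0=1$. For $\phi(x)=\sum_{m\ge1}\phi_mx^m/m!$, the Bell polynomials are $B_{k,p}(\phi_\bullet)=\frac{k!}{p!}[x^k]\phi(x)^p$, with $B_{k,0}(\phi_\bullet)=0$ for $k\ge1$. A Laplace exponent of a subordinator is a function of the form $\psi(x)=cx+\int_0^\infty(1-e^{-xt})\pi(dt)$, with $c\ge0$ and $\pi$ a measure on $(0,\infty)$ such that $\int(1\wedge t)\pi(dt)<\infty$. *)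

theory Defs
  imports "HOL-Probability.Probability" "HOL-Computational_Algebra.Formal_Power_Series"
begin

text \<open>A function psi is the Laplace exponent of a subordinator on the domain D if
  psi(x) = c x + int (1 - exp(-x t)) pi(dt) for all x in D, with c \<ge> 0 and pi a
  Borel measure on (0,\<infinity>) (i.e. no mass on (-\<infinity>,0]) with int (1 min t) pi(dt) < \<infinity>.
  The integral is required to exist (Bochner integrable) for each x in D.
  The measure pi is returned as well, so that properties of it can be stated.\<close>
definition laplace_exponent_with ::
  "real set \<Rightarrow> (real \<Rightarrow> real) \<Rightarrow> real \<Rightarrow> real measure \<Rightarrow> bool" where
  "laplace_exponent_with D \<psi> c \<pi> \<longleftrightarrow>
     c \<ge> 0 \<and> sets \<pi> = sets borel \<and> emeasure \<pi> {..0} = 0 \<and>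
     (\<integral>\<^sup>+ t. ennreal (min 1 t) \<partial>\<pi>) < \<infinity> \<and>
     (\<forall>x\<in>D. integrable \<pi> (\<lambda>t. 1 - exp (- x * t)) \<and>
              \<psi> x = c * x + (\<integral> t. (1 - exp (- x * t)) \<partial>\<pi>))"

definition egf :: "(nat \<Rightarrow> real) \<Rightarrow> real fps" where
  "egf \<phi> = Abs_fps (\<lambda>m. if m = 0 then 0 else \<phi> m / fact m)"

text \<open>Bell polynomial B_{k,p}(phi) = k!/p! [x^k] phi(x)^p (so B_{k,0} = 0 for k \<ge> 1).\<close>
definition bell_poly :: "nat \<Rightarrow> nat \<Rightarrow> (nat \<Rightarrow> real) \<Rightarrow> real" where
  "bell_poly k p \<phi> = fact k / fact p * fps_nth (egf \<phi> ^ p) k"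

text \<open>Coefficients of phi(x) = x (1-x)^(-alpha): phi_m = m (alpha)_{m-1}.\<close>
definition phi_coeff :: "real \<Rightarrow> nat \<Rightarrow> real" where
  "phi_coeff \<alpha> m = of_nat m * pochhammer \<alpha> (m - 1)"

end

theory Submission
  imports Defs "HOL-Real_Asymp.Real_Asymp"
begin

text \<open>
  Since d/dt (t^(\<alpha>-1) e^(-t)) = - t^(\<alpha>-2) e^(-t) (1 - \<alpha> + t), the nonnegative density
  \<nu>(t) = t^(\<alpha>-2) e^(-t) (1 - \<alpha> + t) / \<Gamma>(\<alpha>) on (0, \<infinity>) is minus a derivative, and
  integration by parts turns \<integral> (1 - e^(-x t)) \<nu>(t) dt into the Gamma integral
  x / \<Gamma>(\<alpha>) \<integral> t^(\<alpha>-1) e^(-(1+x) t) dt = x (1+x)^(-\<alpha>). This is unbounded in x but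
  dominated by the total mass of \<nu>, so that mass is infinite.

  For the Bell polynomials, \<phi>(x) = x (1-x)^(-\<alpha>), and the series
  (1-x)^(-a) = \<Sum> (a)_n x^n / n! satisfy (1-x)^(-a) (1-x)^(-b) = (1-x)^(-(a+b)) by Vandermonde's
  identity for rising factorials. Hence \<phi>(x)^p = x^p \<Sum> (p\<alpha>)_n x^n / n!, so
  B_{k,p} = k! / (p! (k-p)!) (p\<alpha>)_{k-p}, and the ratio follows by cancellation.
\<close>

definition gamma_kernel :: "real \<Rightarrow> real \<Rightarrow> real \<Rightarrow> real" where
  "gamma_kernel s b t = indicator {0<..} t * (t powr (s - 1) * exp (- (b * t)))"

lemma gamma_kernel_borel_measurable [measurable]: "gamma_kernel s b \<in> borel_measurable borel"
  unfolding gamma_kernel_def by measurable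

lemma nn_integral_gamma_kernel:
  assumes s: "s > 0" and b: "b > 0"
  shows "(\<integral>\<^sup>+t. ennreal (gamma_kernel s b t) \<partial>lborel) = ennreal (Gamma s / b powr s)"
proof -
  have rescale: "ennreal (indicator {0..} (b * t) * (b * t) powr (s - 1) / exp (b * t)) =
      ennreal (b powr (s - 1)) * ennreal (gamma_kernel s b t)" for t
  proof (cases "t > 0")
    case True
    then show ?thesis using b
      by (simp add: gamma_kernel_def ennreal_mult[symmetric] powr_mult exp_minus field_simps)
  next
    case False
    then show ?thesis using b
      by (cases "t = 0") (auto simp: gamma_kernel_def indicator_def zero_le_mult_iff)
  qed
  have "ennreal (Gamma s) = (\<integral>\<^sup>+t. ennreal (indicator {0..} t * t powr (s - 1) / exp t) \<partial>lborel)"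
    using Gamma_conv_nn_integral_real[OF s] by simp
  also have "\<dots> = ennreal b * (\<integral>\<^sup>+t. ennreal (b powr (s - 1)) * ennreal (gamma_kernel s b t) \<partial>lborel)"
    using b by (subst nn_integral_real_affine[where c = b and t = 0]) (simp_all add: rescale)
  also have "\<dots> = ennreal (b powr s) * (\<integral>\<^sup>+t. ennreal (gamma_kernel s b t) \<partial>lborel)"
    using b by (simp add: nn_integral_cmult mult.assoc[symmetric] ennreal_mult[symmetric] powr_diff)
  finally have "ennreal (Gamma s) = ennreal (b powr s) * (\<integral>\<^sup>+t. ennreal (gamma_kernel s b t) \<partial>lborel)" .
  then show ?thesis
    using b Gamma_real_pos[OF s]
    by (metis divide_ennreal ennreal_mult_divide_eq ennreal_eq_zero_iff ennreal_neq_top less_le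
        mult.commute powr_gt_zero)
qed

lemma has_bochner_integral_gamma_kernel:
  assumes "s > 0" and "b > 0"
  shows "has_bochner_integral lborel (gamma_kernel s b) (Gamma s / b powr s)"
  using assms nn_integral_gamma_kernel[OF assms]
  by (intro has_bochner_integral_nn_integral) (auto simp: gamma_kernel_def)

lemma integrable_gamma_kernel: "s > 0 \<Longrightarrow> b > 0 \<Longrightarrow> integrable lborel (gamma_kernel s b)"
  using has_bochner_integral_gamma_kernel by (rule integrable.intros)

lemma abs_one_minus_exp_le:
  fixes x t :: real
  assumes t: "t \<ge> 0"
  shows "\<bar>1 - exp (- x * t)\<bar> \<le> \<bar>x\<bar> * t * exp (max 0 (- x) * t)"
proof (cases "x \<ge> 0")
  case True
  have "1 + (- x * t) \<le> exp (- x * t)" by (rule exp_ge_add_one_self)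
  moreover have "exp (- x * t) \<le> 1" using True t by simp
  ultimately show ?thesis using True by simp
next
  case False
  define u where "u = - x * t"
  have u: "u \<ge> 0" using False t by (simp add: u_def mult_nonpos_nonneg)
  have "exp u * (1 - u) \<le> exp u * exp (- u)"
    using exp_ge_add_one_self[of "- u"] by (intro mult_left_mono) auto
  then have "exp u - u * exp u \<le> 1" by (simp add: exp_minus field_simps)
  moreover have "exp u \<ge> 1" using u by simp
  ultimately show ?thesis using False t by (simp add: u_def abs_if algebra_simps)
qed

lemma min_1_le_one_minus_exp:
  fixes t :: real
  assumes "t \<ge> 0"
  shows "(1 - exp (- 1)) * min 1 t \<le> 1 - exp (- t)"
proof (cases "t \<ge> 1")
  case True
  then show ?thesis by simp
next
  case False
  have "exp ((1 - t) *\<^sub>R 0 + t *\<^sub>R (- 1)) \<le> (1 - t) * exp 0 + t * exp (- 1)"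
    using False assms by (intro convex_onD[OF exp_convex]) auto
  then show ?thesis using False by (simp add: algebra_simps)
qed

definition levy_density :: "real \<Rightarrow> real \<Rightarrow> real" where
  "levy_density a t = indicator {0<..} t * (t powr (a - 2) * exp (- t) * (1 - a + t) / Gamma a)"

lemma levy_density_borel_measurable [measurable]: "levy_density a \<in> borel_measurable borel"
  unfolding levy_density_def by measurable

lemma levy_density_nonneg: "0 < a \<Longrightarrow> a \<le> 1 \<Longrightarrow> levy_density a t \<ge> 0"
  by (auto simp: levy_density_def indicator_def)

lemma powr_minus_1_eq_mult_powr_minus_2: "(t::real) > 0 \<Longrightarrow> t powr (a - 1) = t * t powr (a - 2)"
  using powr_mult_base[of t "a - 2"] by simp

lemma integrable_levy_density_laplace:
  fixes a x :: real
  assumes a: "0 < a" "a \<le> 1" and x: "x > -1"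
  shows "integrable lborel (\<lambda>t. (1 - exp (- x * t)) * levy_density a t)"
proof (rule Bochner_Integration.integrable_bound)
  define m where "m = max 0 (- x)"
  have b: "1 - m > 0" using x by (simp add: m_def)
  \<comment> \<open>|1 - e^(-x t)| \<le> |x| t e^(m t) turns the integrand into two Gamma kernels of rate 1 - m\<close>
  define bound where
    "bound t = \<bar>x\<bar> / Gamma a * ((1 - a) * gamma_kernel a (1 - m) t + gamma_kernel (a + 1) (1 - m) t)"
    for t
  show "integrable lborel bound"
    unfolding bound_def using integrable_gamma_kernel b a by auto
  show "AE t in lborel. norm ((1 - exp (- x * t)) * levy_density a t) \<le> norm (bound t)"
  proof (rule AE_I2)
    fix t :: real
    show "norm ((1 - exp (- x * t)) * levy_density a t) \<le> norm (bound t)"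
    proof (cases "t > 0")
      case True
      have "t powr a = t * (t * t powr (a - 2))"
        using powr_mult_base[of t "a - 1"] powr_minus_1_eq_mult_powr_minus_2[OF True] True by simp
      moreover have "exp (- ((1 - m) * t)) = exp (m * t) * exp (- t)"
        by (simp add: algebra_simps flip: exp_add)
      ultimately have "\<bar>x\<bar> * t * exp (m * t) * levy_density a t = bound t"
        using True powr_minus_1_eq_mult_powr_minus_2[OF True, of a]
        by (simp add: bound_def levy_density_def gamma_kernel_def field_simps)
      moreover have "\<bar>1 - exp (- x * t)\<bar> * levy_density a t \<le> \<bar>x\<bar> * t * exp (m * t) * levy_density a t"
        using abs_one_minus_exp_le[of t x] True levy_density_nonneg[OF a]
        by (intro mult_right_mono) (auto simp: m_def)
      ultimately show ?thesis
        using levy_density_nonneg[OF a] by (simp add: abs_mult)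
    qed (simp add: levy_density_def)
  qed
qed (simp add: levy_density_def)

lemma tendsto_laplace_boundary_at_right_0:
  fixes a x :: real
  assumes "0 < a" "a < 1"
  shows "((\<lambda>t. (1 - exp (- x * t)) * t powr (a - 1) * exp (- t)) \<longlongrightarrow> 0) (at_right 0)"
proof (cases x "0 :: real" rule: linorder_cases)
  case less
  then show ?thesis using assms by real_asymp
next
  case greater
  then show ?thesis using assms by real_asymp
qed simp

lemma tendsto_laplace_boundary_at_top:
  fixes a x :: real
  assumes "x > -1"
  shows "((\<lambda>t. (1 - exp (- x * t)) * t powr (a - 1) * exp (- t)) \<longlongrightarrow> 0) at_top"
proof -
  have "((\<lambda>t. exp (- t) * t powr (a - 1) - exp (- ((1 + x) * t)) * t powr (a - 1)) \<longlongrightarrow> 0 - 0) at_top"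
    using assms by (intro tendsto_diff) real_asymp+
  moreover have "exp (- t) * t powr (a - 1) - exp (- ((1 + x) * t)) * t powr (a - 1) =
      (1 - exp (- x * t)) * t powr (a - 1) * exp (- t)" for t
    by (simp add: algebra_simps flip: exp_add)
  ultimately show ?thesis by simp
qed

lemma set_integral_Ioi_derivative_eq_0:
  fixes f F :: "real \<Rightarrow> real"
  assumes "\<And>t. 0 < t \<Longrightarrow> (F has_real_derivative f t) (at t)"
    and "\<And>t. 0 < t \<Longrightarrow> isCont f t"
    and "set_integrable lborel {0<..} f"
    and "(F \<longlongrightarrow> 0) (at_right 0)" and "(F \<longlongrightarrow> 0) at_top"
  shows "(LBINT t:{0<..}. f t) = 0"
proof -
  have "(LBINT t=ereal 0..\<infinity>. f t) = 0 - 0"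
    by (rule interval_integral_FTC_integrable)
      (use assms in \<open>auto simp: has_real_derivative_iff_has_vector_derivative ereal_tendsto_simps1\<close>)
  then show ?thesis by (simp add: interval_integral_Ioi)
qed

lemma integral_levy_density_laplace:
  fixes a x :: real
  assumes a: "0 < a" "a < 1" and x: "x > -1"
  shows "(\<integral>t. (1 - exp (- x * t)) * levy_density a t \<partial>lborel) = x * (1 + x) powr (- a)"
proof -
  have G: "Gamma a > 0" using a by simp
  define F where "F t = - ((1 - exp (- x * t)) * t powr (a - 1) * exp (- t)) / Gamma a" for t
  define f where "f t = (1 - exp (- x * t)) * (t powr (a - 2) * exp (- t) * (1 - a + t) / Gamma a) -
      x / Gamma a * (t powr (a - 1) * exp (- ((1 + x) * t)))" for t
  define k where "k t = x / Gamma a * gamma_kernel a (1 + x) t" for t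
  have split: "(1 - exp (- x * t)) * levy_density a t = indicator {0<..} t * f t + k t" for t
    by (simp add: levy_density_def gamma_kernel_def f_def k_def indicator_def)
  have k: "has_bochner_integral lborel k (x * (1 + x) powr (- a))"
  proof -
    have "has_bochner_integral lborel k (x / Gamma a * (Gamma a / (1 + x) powr a))"
      unfolding k_def using a x by (intro has_bochner_integral_mult_right has_bochner_integral_gamma_kernel) auto
    then show ?thesis using G by (simp add: powr_minus divide_simps)
  qed
  have f: "set_integrable lborel {0<..} f"
  proof -
    have "integrable lborel (\<lambda>t. (1 - exp (- x * t)) * levy_density a t - k t)"
      using integrable_levy_density_laplace[of a x] k a x by (auto intro: integrable.intros)
    then show ?thesis unfolding set_integrable_def split by simp
  qed
  have "(LBINT t:{0<..}. f t) = 0"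
  proof (rule set_integral_Ioi_derivative_eq_0[OF _ _ f])
    fix t :: real assume t: "0 < t"
    have "exp (- ((1 + x) * t)) = exp (- (x * t)) * exp (- t)"
      by (simp add: algebra_simps flip: exp_add)
    then show "(F has_real_derivative f t) (at t)"
      unfolding F_def f_def using t G
      by (auto intro!: derivative_eq_intros simp: powr_minus_1_eq_mult_powr_minus_2[OF t] field_simps)
    show "isCont f t"
      unfolding f_def using t G by (intro continuous_intros) auto
  next
    show "(F \<longlongrightarrow> 0) (at_right 0)"
      unfolding F_def using tendsto_laplace_boundary_at_right_0[OF a]
      by (intro tendsto_divide_zero tendsto_minus_cancel_left[THEN iffD1]) simp
    show "(F \<longlongrightarrow> 0) at_top"
      unfolding F_def using tendsto_laplace_boundary_at_top[OF x]
      by (intro tendsto_divide_zero tendsto_minus_cancel_left[THEN iffD1]) simp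
  qed
  then have "(\<integral>t. indicator {0<..} t * f t \<partial>lborel) = 0"
    by (simp add: set_lebesgue_integral_def)
  moreover have "(\<integral>t. indicator {0<..} t * f t + k t \<partial>lborel) =
      (\<integral>t. indicator {0<..} t * f t \<partial>lborel) + (\<integral>t. k t \<partial>lborel)"
    using f k by (intro Bochner_Integration.integral_add) (auto simp: set_integrable_def intro: integrable.intros)
  ultimately show ?thesis
    unfolding split using has_bochner_integral_integral_eq[OF k] by simp
qed

lemma AE_gt_0_if_null_atMost_0:
  assumes "sets \<pi> = sets borel" and "emeasure \<pi> {..0} = 0"
  shows "AE t in \<pi>. (0 :: real) < t"
  by (rule AE_I[of _ _ "{..0}"]) (use assms in \<open>auto simp: sets_eq_imp_space_eq[OF assms(1)]\<close>)

lemma nn_integral_min_1_finite: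
  fixes \<pi> :: "real measure"
  assumes sets: "sets \<pi> = sets borel" and null: "emeasure \<pi> {..0} = 0"
    and integrable: "integrable \<pi> (\<lambda>t. 1 - exp (- t))"
  shows "(\<integral>\<^sup>+ t. ennreal (min 1 t) \<partial>\<pi>) < \<infinity>"
proof -
  define C where "C = 1 / (1 - exp (- 1 :: real))"
  have "(\<integral>\<^sup>+ t. ennreal (min 1 t) \<partial>\<pi>) \<le> (\<integral>\<^sup>+ t. ennreal (norm (C * (1 - exp (- t)))) \<partial>\<pi>)"
  proof (rule nn_integral_mono_AE)
    show "AE t in \<pi>. ennreal (min 1 t) \<le> ennreal (norm (C * (1 - exp (- t))))"
      using AE_gt_0_if_null_atMost_0[OF sets null]
    proof eventually_elim
      case (elim t)
      then have "min 1 t \<le> C * (1 - exp (- t))"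
        using min_1_le_one_minus_exp[of t] by (simp add: C_def field_simps)
      then show ?case by (intro ennreal_leI) simp
    qed
  qed
  also have "\<dots> < \<infinity>"
    using integrable_mult_right[OF integrable, of C] unfolding integrable_iff_bounded by blast
  finally show ?thesis .
qed

lemma laplace_exponent_le_emeasure_space:
  assumes \<psi>: "laplace_exponent_with D \<psi> c \<pi>" and x: "x \<in> D" "x \<ge> 0"
  shows "ennreal (\<psi> x - c * x) \<le> emeasure \<pi> (space \<pi>)"
proof -
  have "AE t in \<pi>. 0 \<le> 1 - exp (- x * t)"
    using AE_gt_0_if_null_atMost_0[of \<pi>] \<psi> x
    by (auto simp: laplace_exponent_with_def)
  then have "ennreal (\<psi> x - c * x) = (\<integral>\<^sup>+ t. ennreal (1 - exp (- x * t)) \<partial>\<pi>)"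
    using \<psi> x by (simp add: laplace_exponent_with_def nn_integral_eq_integral)
  also have "\<dots> \<le> (\<integral>\<^sup>+ t. 1 \<partial>\<pi>)"
    by (rule nn_integral_mono) simp
  finally show ?thesis by simp
qed

lemma laplace_exponent_emeasure_space_infinite:
  assumes \<psi>: "laplace_exponent_with D \<psi> c \<pi>" and "{0<..} \<subseteq> D"
    and unbounded: "filterlim (\<lambda>x. \<psi> x - c * x) at_top at_top"
  shows "emeasure \<pi> (space \<pi>) = \<infinity>"
proof (rule ccontr)
  assume "emeasure \<pi> (space \<pi>) \<noteq> \<infinity>"
  then obtain M where M: "emeasure \<pi> (space \<pi>) = ennreal M" "M \<ge> 0"
    by (cases "emeasure \<pi> (space \<pi>)" rule: ennreal_cases) auto
  have "eventually (\<lambda>x. M < \<psi> x - c * x) at_top"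
    using unbounded by (simp add: filterlim_at_top_dense)
  moreover have "eventually (\<lambda>x. (0 :: real) < x) at_top"
    by simp
  ultimately have "eventually (\<lambda>x. 0 < x \<and> M < \<psi> x - c * x) at_top"
    by eventually_elim simp
  then obtain x where x: "0 < x" "M < \<psi> x - c * x"
    using eventually_happens'[OF trivial_limit_at_top_linorder] by blast
  then have "ennreal (\<psi> x - c * x) \<le> ennreal M"
    using laplace_exponent_le_emeasure_space[OF \<psi>, of x] assms(2) M(1) by auto
  with x M(2) show False
    by simp
qed

definition levy_measure :: "real \<Rightarrow> real measure" where
  "levy_measure a = density lborel (\<lambda>t. ennreal (levy_density a t))"

lemma laplace_exponent_levy_measure:
  assumes a: "0 < a" "a < 1"
  shows "laplace_exponent_with {-1<..} (\<lambda>x. x * (1 + x) powr (- a)) 0 (levy_measure a)"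
proof -
  have nonneg: "AE t in lborel. 0 \<le> levy_density a t"
    using levy_density_nonneg a by simp
  have sets: "sets (levy_measure a) = sets borel"
    by (simp add: levy_measure_def)
  have null: "emeasure (levy_measure a) {..0} = 0"
    unfolding levy_measure_def
    by (subst emeasure_density) (auto simp: levy_density_def nn_integral_0_iff_AE indicator_def)
  have laplace: "integrable (levy_measure a) (\<lambda>t. 1 - exp (- x * t)) \<and>
      x * (1 + x) powr (- a) = 0 * x + (\<integral>t. 1 - exp (- x * t) \<partial>levy_measure a)" if "x > -1" for x
    unfolding levy_measure_def using nonneg that a
      integrable_levy_density_laplace[of a x] integral_levy_density_laplace[of a x]
    by (simp add: integrable_density integral_density mult.commute)
  have "(\<integral>\<^sup>+ t. ennreal (min 1 t) \<partial>levy_measure a) < \<infinity>"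
    using laplace[of 1] by (intro nn_integral_min_1_finite[OF sets null]) simp_all
  with sets null laplace show ?thesis
    by (auto simp: laplace_exponent_with_def)
qed

definition pochhammer_fps :: "real \<Rightarrow> real fps" where
  "pochhammer_fps a = Abs_fps (\<lambda>n. pochhammer a n / fact n)"

lemma pochhammer_fps_0 [simp]: "pochhammer_fps 0 = 1"
  by (rule fps_ext) (auto simp: pochhammer_fps_def pochhammer_0_left)

lemma pochhammer_fps_add: "pochhammer_fps (a + b) = pochhammer_fps a * pochhammer_fps b"
proof (rule fps_ext)
  fix n
  have "pochhammer (a + b) n / fact n =
      (\<Sum>k\<le>n. of_nat (n choose k) * pochhammer a k * pochhammer b (n - k)) / fact n"
    by (simp only: pochhammer_binomial_sum)
  also have "\<dots> = (\<Sum>k=0..n. pochhammer a k / fact k * (pochhammer b (n - k) / fact (n - k)))"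
    by (simp add: sum_divide_distrib atMost_atLeast0 binomial_fact field_simps)
  finally show "fps_nth (pochhammer_fps (a + b)) n = fps_nth (pochhammer_fps a * pochhammer_fps b) n"
    by (simp add: pochhammer_fps_def fps_mult_nth)
qed

lemma pochhammer_fps_power: "pochhammer_fps a ^ p = pochhammer_fps (of_nat p * a)"
  by (induction p) (simp_all add: pochhammer_fps_add algebra_simps)

lemma egf_phi_coeff: "egf (phi_coeff a) = fps_X * pochhammer_fps a"
proof (rule fps_ext)
  fix n
  show "fps_nth (egf (phi_coeff a)) n = fps_nth (fps_X * pochhammer_fps a) n"
    by (cases n) (simp_all add: egf_def pochhammer_fps_def phi_coeff_def)
qed

lemma bell_poly_phi_coeff:
  assumes "p \<le> k"
  shows "bell_poly k p (phi_coeff a) = fact k / (fact p * fact (k - p)) * pochhammer (of_nat p * a) (k - p)"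
  unfolding bell_poly_def egf_phi_coeff power_mult_distrib pochhammer_fps_power
  using assms by (simp add: fps_X_power_mult_nth pochhammer_fps_def)

lemma bell_poly_ratio_phi_coeff:
  assumes a: "0 < a" and P: "1 \<le> P" "P \<le> k"
  shows "bell_poly k (P - 1) (phi_coeff a) / bell_poly k P (phi_coeff a) =
    real P / real (k - P + 1) * (pochhammer (a * real (P - 1)) (k - P + 1) / pochhammer (a * real P) (k - P))"
proof -
  obtain q m where q: "P = Suc q" and m: "k = Suc q + m"
    using P by (metis Suc_le_D le_Suc_ex One_nat_def)
  have "pochhammer (real (Suc q) * a) m > 0"
    using a by (intro pochhammer_pos) auto
  then show ?thesis
    using bell_poly_phi_coeff[of "P - 1" k a] bell_poly_phi_coeff[of P k a]
    by (simp add: q m mult.commute)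
qed

theorem corollary15:
  fixes \<alpha> :: real
  assumes "0 < \<alpha>" and "\<alpha> < 1"
  shows "(\<exists>c \<pi>. laplace_exponent_with {-1<..} (\<lambda>x. x * (1 + x) powr (- \<alpha>)) c \<pi> \<and>
                 emeasure \<pi> (space \<pi>) = \<infinity>) \<and>
         (\<forall>k P. 1 \<le> P \<and> P \<le> k \<longrightarrow>
            bell_poly k (P - 1) (phi_coeff \<alpha>) / bell_poly k P (phi_coeff \<alpha>) =
              real P / real (k - P + 1) *
              (pochhammer (\<alpha> * real (P - 1)) (k - P + 1) / pochhammer (\<alpha> * real P) (k - P)))"
proof (intro conjI exI allI impI)
  have unbounded: "filterlim (\<lambda>x. x * (1 + x) powr (- \<alpha>) - 0 * x) at_top at_top"
    using assms by simp real_asymp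
  show \<psi>: "laplace_exponent_with {-1<..} (\<lambda>x. x * (1 + x) powr (- \<alpha>)) 0 (levy_measure \<alpha>)"
    using laplace_exponent_levy_measure[OF assms] .
  show "emeasure (levy_measure \<alpha>) (space (levy_measure \<alpha>)) = \<infinity>"
    using laplace_exponent_emeasure_space_infinite[OF \<psi> _ unbounded] by auto
next
  fix k P :: nat
  assume "1 \<le> P \<and> P \<le> k"
  then show "bell_poly k (P - 1) (phi_coeff \<alpha>) / bell_poly k P (phi_coeff \<alpha>) =
      real P / real (k - P + 1) * (pochhammer (\<alpha> * real (P - 1)) (k - P + 1) / pochhammer (\<alpha> * real P) (k - P))"
    using bell_poly_ratio_phi_coeff[OF assms(1)] by blast
qed

end
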